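(* Fix $\theta\ge1$. Let $A$ be a finitely generated free abelian group, let $S$ be a symmetric finite generating set for $A$, and let $T$ be a finite subset of $A$ such that the subgroup $\langle T\rangle$ has finite index in $A$. For $N\in\mathbb{N}$ let $T_N=\{t^{\pm N}\mid t\in T\}$. Then for all sufficiently large $N$, only finitely many words in the letters $S$ are $\theta$-efficient for the word metric on $A$ associated to the generating set $S\cup T_N$.
   Context: Given a group with a symmetric finite generating set $Y$ and associated word metric $d$, a word $w=a_1\cdots a_l$ in letters from a subset of $Y$ is $\theta$-efficient if $l\le\theta\, d(1,w)$, where $d(1,w)$ is the word length (with respect to $Y$) of the element represented by $w$. *)

theory Defs
  imports Complex_Main "HOL-Library.Function_Algebras"
begin

text \<open>The free abelian group of rank n, realised as Z^n: integer vectors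
  indexed by nat with support in {..<n}; the group operation is pointwise addition.\<close>
definition Zn :: "nat \<Rightarrow> (nat \<Rightarrow> int) set" where
  "Zn n = {v. \<forall>i\<ge>n. v i = 0}"

definition symmetric_gen_set :: "nat \<Rightarrow> (nat \<Rightarrow> int) set \<Rightarrow> bool" where
  "symmetric_gen_set n Y \<longleftrightarrow> Y \<subseteq> Zn n \<and> (\<forall>y\<in>Y. - y \<in> Y)
     \<and> (\<forall>x\<in>Zn n. \<exists>w. set w \<subseteq> Y \<and> sum_list w = x)"

definition gen_subgroup :: "(nat \<Rightarrow> int) set \<Rightarrow> (nat \<Rightarrow> int) set" where
  "gen_subgroup T = {x. \<exists>w. set w \<subseteq> T \<union> uminus ` T \<and> sum_list w = x}"

definition finite_index :: "nat \<Rightarrow> (nat \<Rightarrow> int) set \<Rightarrow> bool" where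
  "finite_index n H \<longleftrightarrow> finite {(\<lambda>h. x + h) ` H | x. x \<in> Zn n}"

definition powset :: "nat \<Rightarrow> (nat \<Rightarrow> int) set \<Rightarrow> (nat \<Rightarrow> int) set" where
  "powset N T = {(\<lambda>i. int N * t i) | t. t \<in> T} \<union> {(\<lambda>i. - (int N * t i)) | t. t \<in> T}"

definition word_length :: "(nat \<Rightarrow> int) set \<Rightarrow> (nat \<Rightarrow> int) \<Rightarrow> nat" where
  "word_length Y x = (LEAST l. \<exists>w. set w \<subseteq> Y \<and> length w = l \<and> sum_list w = x)"

definition efficient :: "real \<Rightarrow> (nat \<Rightarrow> int) set \<Rightarrow> (nat \<Rightarrow> int) list \<Rightarrow> bool" where
  "efficient \<theta> Y w \<longleftrightarrow> real (length w) \<le> \<theta> * real (word_length Y (sum_list w))"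

end

theory Submission
  imports Defs
begin

text \<open>Since the subgroup generated by T has finite index, every unit vector e_i has a positive
  multiple m_i e_i that is a T-word u_i; scaling by N, the word N u_i over T_N represents
  N m_i e_i with only |u_i| letters. Dividing each coordinate of z with remainder by N m_i
  therefore bounds the word length of z in S \<union> T_N by O(|z|/N) + O(N). The coordinates of
  an S-word w of length l are O(l), so if w is \<theta>-efficient then l \<le> \<theta> (O(l/N) + O(N)); once
  N is large compared with \<theta>, the first term can be absorbed, leaving l = O(N). Hence only
  words of bounded length, finitely many, are efficient.\<close>

definition unit_vec :: "nat \<Rightarrow> nat \<Rightarrow> int" where
  "unit_vec i = (\<lambda>j. if j = i then 1 else 0)"

definition has_word :: "(nat \<Rightarrow> int) set \<Rightarrow> nat \<Rightarrow> (nat \<Rightarrow> int) \<Rightarrow> bool" where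
  "has_word Y k x \<longleftrightarrow> (\<exists>w. set w \<subseteq> Y \<and> length w \<le> k \<and> sum_list w = x)"

lemma of_int_fun_apply: "(of_int c :: 'a \<Rightarrow> 'b :: ring_1) x = of_int c"
  by (cases c rule: int_cases) simp_all

lemma has_word_zero: "has_word Y k 0"
  unfolding has_word_def by (rule exI[of _ "[]"]) simp

lemma has_word_add: "has_word Y a x \<Longrightarrow> has_word Y b y \<Longrightarrow> has_word Y (a + b) (x + y)"
  unfolding has_word_def by (metis add_mono le_sup_iff length_append set_append sum_list_append)

lemma has_word_subset: "Y \<subseteq> Y' \<Longrightarrow> has_word Y k x \<Longrightarrow> has_word Y' k x"
  unfolding has_word_def by blast

lemma has_word_uminus:
  assumes "\<forall>y\<in>Y. - y \<in> Y" and "has_word Y k x"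
  shows "has_word Y k (- x)"
proof -
  obtain w where w: "set w \<subseteq> Y" "length w \<le> k" "sum_list w = x"
    using assms(2) unfolding has_word_def by blast
  have "sum_list (map uminus w) = - sum_list w" by (induction w) simp_all
  then show ?thesis unfolding has_word_def using w assms(1)
    by (intro exI[of _ "map uminus w"]) auto
qed

lemma has_word_of_nat_mult:
  fixes c :: nat
  shows "has_word Y k x \<Longrightarrow> has_word Y (c * k) (of_nat c * x)"
  by (induction c) (simp_all add: has_word_zero has_word_add algebra_simps)

lemma has_word_of_int_mult:
  assumes "\<forall>y\<in>Y. - y \<in> Y" and "has_word Y k x"
  shows "has_word Y (nat \<bar>c\<bar> * k) (of_int c * x)"
proof (cases "c \<ge> 0")
  case True
  then show ?thesis using has_word_of_nat_mult[OF assms(2), of "nat c"] by simp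
next
  case False
  then have "of_int c * x = of_nat (nat \<bar>c\<bar>) * (- x)" by simp
  then show ?thesis using has_word_of_nat_mult[OF has_word_uminus[OF assms]] by metis
qed

lemma has_word_sum:
  fixes n :: nat
  shows "(\<And>i. i < n \<Longrightarrow> has_word Y (k i) (x i)) \<Longrightarrow> has_word Y (\<Sum>i<n. k i) (\<Sum>i<n. x i)"
  by (induction n) (simp_all add: has_word_zero has_word_add)

lemma word_length_le: "has_word Y k x \<Longrightarrow> word_length Y x \<le> k"
  unfolding has_word_def word_length_def by (metis (mono_tags, lifting) Least_le order_trans)

lemma has_word_div_mod:
  assumes "\<forall>y\<in>Y. - y \<in> Y" and "has_word Y L (of_int M * v)" and "has_word Y K v"
    and "M > 0"
  shows "has_word Y (nat \<bar>a div M\<bar> * L + nat (a mod M) * K) (of_int a * v)"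
proof -
  have "a = a div M * M + int (nat (a mod M))" using \<open>M > 0\<close> by simp
  then have "(of_int a :: nat \<Rightarrow> int) = of_int (a div M) * of_int M + of_nat (nat (a mod M))"
    by (metis of_int_add of_int_mult of_int_of_nat_eq)
  then have "of_int a * v = of_int (a div M) * (of_int M * v) + of_nat (nat (a mod M)) * v"
    by (simp add: distrib_right mult.assoc)
  then show ?thesis
    using has_word_add[OF has_word_of_int_mult[OF assms(1,2)] has_word_of_nat_mult[OF assms(3)]]
    by simp
qed

lemma abs_div_mult_le:
  fixes a :: int
  assumes "N \<ge> 1" "m \<ge> 1"
  shows "\<bar>a div (N * m)\<bar> * N \<le> \<bar>a\<bar> + N"
proof -
  define q r where "q = a div (N * m)" and "r = a mod (N * m)"
  have "N * m > 0" using assms by simp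
  then have a: "a = q * (N * m) + r" and r: "0 \<le> r" "r < N * m"
    unfolding q_def r_def by (simp_all add: div_mult_mod_eq[symmetric])
  show ?thesis
  proof (cases "q \<ge> 0")
    case True
    have "\<bar>q\<bar> * N \<le> q * (N * m)" using True assms by (simp add: mult_left_mono)
    also have "\<dots> \<le> \<bar>a\<bar>" using a r by linarith
    finally show ?thesis using assms(1) unfolding q_def by linarith
  next
    case False
    have "\<bar>q\<bar> * N = N - (q + 1) * N" using False by (simp add: algebra_simps)
    also have "\<dots> \<le> N - (q + 1) * (N * m)"
      using False assms by (simp add: mult_left_mono_neg)
    also have "\<dots> \<le> \<bar>a\<bar> + N" using a r by (simp add: algebra_simps)
    finally show ?thesis unfolding q_def .
  qed
qed

lemma div_mod_cost_le:
  fixes a :: int and N m L K :: nat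
  assumes "N \<ge> 1" "m \<ge> 1"
  shows "int N * int (nat \<bar>a div int (N * m)\<bar> * L + nat (a mod int (N * m)) * K)
           \<le> (\<bar>a\<bar> + int N) * int L + int N * int N * int (m * K)"
proof -
  have "\<bar>a div (int N * int m)\<bar> * int N * int L \<le> (\<bar>a\<bar> + int N) * int L"
    using abs_div_mult_le[of "int N" "int m" a] assms by (intro mult_right_mono) auto
  moreover have "int N * (a mod (int N * int m) * int K) \<le> int N * (int N * int m * int K)"
    using assms by (intro mult_left_mono mult_right_mono) (auto intro: order_less_imp_le)
  moreover have "0 \<le> a mod (int N * int m)" using assms by simp
  ultimately show ?thesis by (simp add: algebra_simps)
qed

lemma powset_symmetric: "\<forall>y\<in>powset N T. - y \<in> powset N T"
  unfolding powset_def by (auto simp: fun_Compl_def)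

lemma has_word_powset:
  "set u \<subseteq> T \<union> uminus ` T \<Longrightarrow> has_word (powset N T) (length u) (of_nat N * sum_list u)"
proof (induction u)
  case Nil
  show ?case unfolding has_word_def by simp
next
  case (Cons t u)
  have "of_nat N * t \<in> powset N T"
    using Cons.prems unfolding powset_def by (auto simp: fun_eq_iff)
  then have "has_word (powset N T) 1 (of_nat N * t)"
    unfolding has_word_def by (intro exI[of _ "[of_nat N * t]"]) simp
  moreover have "has_word (powset N T) (length u) (of_nat N * sum_list u)"
    using Cons.prems by (intro Cons.IH) simp
  ultimately have "has_word (powset N T) (1 + length u) (of_nat N * t + of_nat N * sum_list u)"
    by (rule has_word_add)
  then show ?case by (simp only: list.size sum_list.Cons distrib_left add.commute One_nat_def)
qed

lemma sum_fun_apply: "(\<Sum>i\<in>A. f i) x = (\<Sum>i\<in>A. f i x)"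
  by (induction A rule: infinite_finite_induct) simp_all

lemma unit_vec_in_Zn: "i < n \<Longrightarrow> unit_vec i \<in> Zn n"
  unfolding Zn_def unit_vec_def by simp

lemma Zn_eq_sum_unit_vec:
  assumes "x \<in> Zn n"
  shows "x = (\<Sum>i<n. of_int (x i) * unit_vec i)"
proof
  fix j
  have "(\<Sum>i<n. of_int (x i) * unit_vec i) j = (\<Sum>i<n. if i = j then x j else 0)"
    unfolding sum_fun_apply by (intro sum.cong) (auto simp: of_int_fun_apply unit_vec_def)
  also have "\<dots> = x j" using assms by (simp add: Zn_def)
  finally show "x j = (\<Sum>i<n. of_int (x i) * unit_vec i) j" by simp
qed

lemma sum_list_in_Zn: "set w \<subseteq> Zn n \<Longrightarrow> sum_list w \<in> Zn n"
  by (induction w) (auto simp: Zn_def)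

lemma finite_Zn_coord_bound:
  assumes "finite S" "S \<subseteq> Zn n"
  obtains B :: int where "\<forall>s\<in>S. \<forall>j. \<bar>s j\<bar> \<le> B"
proof
  let ?V = "insert 0 ((\<lambda>(s, j). \<bar>s j\<bar>) ` (S \<times> {..<n}))"
  have "finite ?V" using assms(1) by simp
  show "\<forall>s\<in>S. \<forall>j. \<bar>s j\<bar> \<le> Max ?V"
  proof (intro ballI allI)
    fix s j assume "s \<in> S"
    then have "\<bar>s j\<bar> \<in> ?V"
      using assms(2) by (cases "j < n") (force simp: Zn_def)+
    then show "\<bar>s j\<bar> \<le> Max ?V" using \<open>finite ?V\<close> by simp
  qed
qed

lemma sum_list_coord_le:
  assumes "set w \<subseteq> S" "\<forall>s\<in>S. \<forall>j. \<bar>s j\<bar> \<le> B"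
  shows "\<bar>sum_list w j\<bar> \<le> int (length w) * B"
  using assms
proof (induction w)
  case (Cons s w)
  have "\<bar>s j\<bar> \<le> B" "\<bar>sum_list w j\<bar> \<le> int (length w) * B" using Cons by simp_all
  then show ?case using abs_triangle_ineq[of "s j" "sum_list w j"] by (simp add: algebra_simps)
qed simp

text \<open>Pigeonhole on the cosets k x + H.\<close>
lemma finite_index_multiple_mem:
  assumes "finite_index n H" "0 \<in> H" "x \<in> Zn n"
  shows "\<exists>m>0. of_nat m * x \<in> H"
proof -
  define coset where "coset k = (\<lambda>h. of_nat k * x + h) ` H" for k :: nat
  have "range coset \<subseteq> {(\<lambda>h. y + h) ` H | y. y \<in> Zn n}"
    using assms(3) unfolding coset_def Zn_def by auto
  then have "finite (range coset)"
    using assms(1) unfolding finite_index_def by (rule finite_subset)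
  then have "\<not> inj coset" using finite_imageD infinite_UNIV_nat by blast
  then obtain j k where jk: "j < k" "coset j = coset k"
    unfolding inj_def by (metis linorder_neq_iff)
  have "of_nat k * x \<in> coset j"
    using jk(2) assms(2) unfolding coset_def by (metis add.right_neutral image_eqI)
  then obtain h where "h \<in> H" "of_nat k * x = of_nat j * x + h"
    unfolding coset_def by blast
  then have "of_nat (k - j) * x \<in> H"
    using jk(1) by (simp add: of_nat_diff left_diff_distrib algebra_simps)
  then show ?thesis using jk(1) by (intro exI[of _ "k - j"]) simp
qed

lemma finite_index_unit_vec_words:
  assumes "finite_index n (gen_subgroup T)"
  obtains m u where "\<forall>i<n. 0 < m i \<and> set (u i) \<subseteq> T \<union> uminus ` T
                              \<and> sum_list (u i) = of_nat (m i) * unit_vec i"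
proof -
  have "0 \<in> gen_subgroup T"
    unfolding gen_subgroup_def by (auto intro: exI[of _ "[]"])
  then have "\<forall>i<n. \<exists>m>0. of_nat m * unit_vec i \<in> gen_subgroup T"
    using finite_index_multiple_mem[OF assms] unit_vec_in_Zn by blast
  then have "\<forall>i<n. \<exists>m>0. \<exists>u. set u \<subseteq> T \<union> uminus ` T \<and> sum_list u = of_nat m * unit_vec i"
    unfolding gen_subgroup_def by simp
  then show ?thesis using that by metis
qed

lemma symmetric_gen_set_unit_vec_words:
  assumes "symmetric_gen_set n S"
  obtains e where "\<forall>i<n. set (e i) \<subseteq> S \<and> sum_list (e i) = unit_vec i"
proof -
  have "\<forall>i<n. \<exists>w. set w \<subseteq> S \<and> sum_list w = unit_vec i"
    using assms unit_vec_in_Zn unfolding symmetric_gen_set_def by blast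
  then show ?thesis using that by metis
qed

lemma word_length_powset_le:
  fixes N :: nat and z :: "nat \<Rightarrow> int" and C :: int
  assumes S_sym: "\<forall>s\<in>S. - s \<in> S"
    and u: "\<forall>i<n. 0 < m i \<and> set (u i) \<subseteq> T \<union> uminus ` T
                   \<and> sum_list (u i) = of_nat (m i) * unit_vec i"
    and e: "\<forall>i<n. set (e i) \<subseteq> S \<and> sum_list (e i) = unit_vec i"
    and "N \<ge> 1" "z \<in> Zn n" "\<forall>j. \<bar>z j\<bar> \<le> C"
  shows "int N * int (word_length (S \<union> powset N T) z)
           \<le> (C + int N) * int (\<Sum>i<n. length (u i))
             + int N * int N * int (\<Sum>i<n. m i * length (e i))"
proof -
  define Y where "Y = S \<union> powset N T"
  define cost where "cost i = nat \<bar>z i div int (N * m i)\<bar> * length (u i)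
                               + nat (z i mod int (N * m i)) * length (e i)" for i
  have Y_sym: "\<forall>y\<in>Y. - y \<in> Y" using S_sym powset_symmetric unfolding Y_def by blast
  have coord: "has_word Y (cost i) (of_int (z i) * unit_vec i)" if "i < n" for i
  proof -
    have u_i: "set (u i) \<subseteq> T \<union> uminus ` T"
      and scaled: "of_nat N * sum_list (u i) = of_int (int (N * m i)) * unit_vec i"
      using u that by (simp_all add: mult.assoc)
    have "has_word Y (length (u i)) (of_int (int (N * m i)) * unit_vec i)"
      using has_word_powset[OF u_i, of N, unfolded scaled]
      by (rule has_word_subset[rotated]) (simp add: Y_def)
    moreover have "has_word Y (length (e i)) (unit_vec i)"
      using e that unfolding has_word_def Y_def by blast
    moreover have "0 < int (N * m i)" using u that \<open>N \<ge> 1\<close> by simp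
    ultimately show ?thesis unfolding cost_def by (rule has_word_div_mod[OF Y_sym])
  qed
  have "has_word Y (\<Sum>i<n. cost i) (\<Sum>i<n. of_int (z i) * unit_vec i)"
    using coord by (rule has_word_sum)
  then have "word_length Y z \<le> (\<Sum>i<n. cost i)"
    unfolding Zn_eq_sum_unit_vec[OF \<open>z \<in> Zn n\<close>, symmetric] by (rule word_length_le)
  then have "int N * int (word_length Y z) \<le> int N * int (\<Sum>i<n. cost i)"
    by (auto intro!: mult_left_mono simp del: of_nat_sum)
  also have "\<dots> = (\<Sum>i<n. int N * int (cost i))"
    by (simp add: sum_distrib_left)
  also have "\<dots> \<le> (\<Sum>i<n. (C + int N) * int (length (u i)) + int N * int N * int (m i * length (e i)))"
  proof (rule sum_mono)
    fix i assume "i \<in> {..<n}"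
    then have "int N * int (cost i)
                 \<le> (\<bar>z i\<bar> + int N) * int (length (u i)) + int N * int N * int (m i * length (e i))"
      using div_mod_cost_le[of N "m i" "z i" "length (u i)" "length (e i)"] \<open>N \<ge> 1\<close> u
      unfolding cost_def by (simp add: Suc_le_eq)
    also have "\<dots> \<le> (C + int N) * int (length (u i)) + int N * int N * int (m i * length (e i))"
      using assms(6) by (simp add: mult_right_mono)
    finally show "int N * int (cost i) \<le> \<dots>" .
  qed
  also have "\<dots> = (C + int N) * int (\<Sum>i<n. length (u i))
                   + int N * int N * int (\<Sum>i<n. m i * length (e i))"
    by (simp add: sum.distrib sum_distrib_left)
  finally show ?thesis unfolding Y_def .
qed

lemma efficient_length_le:
  fixes l d N \<theta> B P Q :: real
  assumes "l \<le> \<theta> * d" "N * d \<le> (l * B + N) * P + N * N * Q"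
    and "2 * \<theta> * B * P \<le> N" "N > 0" "\<theta> \<ge> 0" "l \<ge> 0"
  shows "l \<le> 2 * \<theta> * (P + N * Q)"
proof -
  have "N * l \<le> \<theta> * (N * d)"
    using assms(1,4) by (simp add: mult_left_mono mult.left_commute)
  also have "\<dots> \<le> \<theta> * ((l * B + N) * P + N * N * Q)"
    using assms(2,5) by (rule mult_left_mono)
  also have "\<dots> = (\<theta> * B * P) * l + \<theta> * N * (P + N * Q)"
    by (simp add: algebra_simps)
  also have "\<dots> \<le> (N / 2) * l + \<theta> * N * (P + N * Q)"
    using mult_right_mono[of "\<theta> * B * P" "N / 2" l] assms(3,6) by simp
  finally have "N * l \<le> N * (2 * \<theta> * (P + N * Q))" by (simp add: algebra_simps)
  then show ?thesis using assms(4) by simp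
qed

lemma efficient_word_length_le:
  fixes \<theta> :: real and N :: nat and B :: int
  assumes S: "S \<subseteq> Zn n" "\<forall>s\<in>S. - s \<in> S" "\<forall>s\<in>S. \<forall>j. \<bar>s j\<bar> \<le> B"
    and u: "\<forall>i<n. 0 < m i \<and> set (u i) \<subseteq> T \<union> uminus ` T
                   \<and> sum_list (u i) = of_nat (m i) * unit_vec i"
    and e: "\<forall>i<n. set (e i) \<subseteq> S \<and> sum_list (e i) = unit_vec i"
    and "\<theta> \<ge> 0" "N \<ge> 1" "2 * \<theta> * B * real (\<Sum>i<n. length (u i)) \<le> N"
    and w: "set w \<subseteq> S" "efficient \<theta> (S \<union> powset N T) w"
  shows "length w \<le> 2 * \<theta> * (real (\<Sum>i<n. length (u i)) + N * real (\<Sum>i<n. m i * length (e i)))"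
proof -
  define z where "z = sum_list w"
  define d where "d = word_length (S \<union> powset N T) z"
  define P where "P = (\<Sum>i<n. length (u i))"
  define Q where "Q = (\<Sum>i<n. m i * length (e i))"
  have "z \<in> Zn n" using w(1) S(1) sum_list_in_Zn unfolding z_def by blast
  moreover have "\<forall>j. \<bar>z j\<bar> \<le> int (length w) * B"
    using sum_list_coord_le[OF w(1) S(3)] unfolding z_def by blast
  ultimately have "int N * int d \<le> (int (length w) * B + int N) * int P + int N * int N * int Q"
    unfolding d_def P_def Q_def using word_length_powset_le[OF S(2) u e \<open>N \<ge> 1\<close>] by blast
  then have "real N * real d \<le> (real (length w) * B + real N) * real P + real N * real N * real Q"
    by (metis (mono_tags) of_int_le_iff of_int_add of_int_mult of_int_of_nat_eq)
  moreover have "length w \<le> \<theta> * d" using w(2) unfolding efficient_def d_def z_def .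
  ultimately show ?thesis
    using efficient_length_le[of "real (length w)" \<theta> "real d" "real N" "real_of_int B" "real P" "real Q"]
      assms(6,8) \<open>N \<ge> 1\<close> unfolding P_def Q_def by simp
qed

theorem lemma5p1:
  fixes \<theta> :: real and n :: nat and S T :: "(nat \<Rightarrow> int) set"
  assumes "\<theta> \<ge> 1"
    and "finite S" and "symmetric_gen_set n S"
    and "finite T" and "T \<subseteq> Zn n"
    and "finite_index n (gen_subgroup T)"
  shows "\<exists>N0. \<forall>N\<ge>N0. finite {w. set w \<subseteq> S \<and> efficient \<theta> (S \<union> powset N T) w}"
proof -
  have S: "S \<subseteq> Zn n" "\<forall>s\<in>S. - s \<in> S"
    using assms(3) unfolding symmetric_gen_set_def by blast+
  obtain B where B: "\<forall>s\<in>S. \<forall>j. \<bar>s j\<bar> \<le> B"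
    using finite_Zn_coord_bound[OF assms(2) S(1)] by blast
  obtain m u where u: "\<forall>i<n. 0 < m i \<and> set (u i) \<subseteq> T \<union> uminus ` T
                              \<and> sum_list (u i) = of_nat (m i) * unit_vec i"
    using finite_index_unit_vec_words[OF assms(6)] by blast
  obtain e where e: "\<forall>i<n. set (e i) \<subseteq> S \<and> sum_list (e i) = unit_vec i"
    using symmetric_gen_set_unit_vec_words[OF assms(3)] by blast
  define P where "P = (\<Sum>i<n. length (u i))"
  define Q where "Q = (\<Sum>i<n. m i * length (e i))"
  show ?thesis
  proof (intro exI allI impI)
    fix N :: nat assume N: "nat \<lceil>2 * \<theta> * B * P\<rceil> + 1 \<le> N"
    then have N_bounds: "N \<ge> 1" "2 * \<theta> * B * P \<le> N"
      using real_nat_ceiling_ge[of "2 * \<theta> * B * P"] by linarith+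
    have "length w \<le> nat \<lceil>2 * \<theta> * (P + N * Q)\<rceil>"
      if "set w \<subseteq> S" "efficient \<theta> (S \<union> powset N T) w" for w
    proof -
      have "length w \<le> 2 * \<theta> * (P + N * Q)"
        using efficient_word_length_le[OF S B u e _ N_bounds[unfolded P_def] that] assms(1)
        unfolding P_def Q_def by simp
      then show ?thesis using real_nat_ceiling_ge[of "2 * \<theta> * (P + N * Q)"] by linarith
    qed
    then show "finite {w. set w \<subseteq> S \<and> efficient \<theta> (S \<union> powset N T) w}"
      by (intro finite_subset[OF _ finite_lists_length_le[OF assms(2)]]) blast
  qed
qed

end
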